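(* Let $a,b,c,d,e\in\mathbb{Z}$ all be nonzero, with $a\equiv 0$, $b\equiv -1$, $c\equiv d\equiv 1$, $e\equiv 4\pmod 7$, and let $W\subset(\mathbb{P}^1)^3$ be the smooth, non-degenerate Markoff-type K3 surface over $\mathbb{Q}$ defined by the $(2,2,2)$-form with affine equation $$ax^2y^2z^2 + b(x^2y^2+x^2z^2+y^2z^2) + cxyz + d(x^2+y^2+z^2) + e = 0.$$ Let $U = W\setminus\{rst=0\}$ and $\mathcal{U}$ the integral model of $U$ over $\mathbb{Z}$ defined by the same equation. Then $\mathcal{U}(\mathbb{Z})$ is not Zariski-dense in $U$.
   Context: Coordinates on $(\mathbb{P}^1)^3$ are $([x:r],[y:s],[z:t])$ and the surface is the zero locus of the degree-$(2,2,2)$ bihomogenization. For a form of this shape, non-degenerate means $c\neq 0$, $be\neq d^2$ and $ad\neq b^2$ (equivalently, the projections $\pi_{ij}:W\to\mathbb{P}^1\times\mathbb{P}^1$ to pairs of factors are quasi-finite). $\mathcal{U}(\mathbb{Z})$ is the set of integer solutions $(x,y,z)\in\mathbb{Z}^3$. *)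

theory Defs
  imports "HOL-Analysis.Analysis" "HOL-Number_Theory.Cong"
begin

text \<open>Bihomogenized (2,2,2)-form on (P^1)^3 with coordinates ([x:r],[y:s],[z:t]).\<close>
definition markoffK3_F ::
  "int \<Rightarrow> int \<Rightarrow> int \<Rightarrow> int \<Rightarrow> int \<Rightarrow>
   complex \<Rightarrow> complex \<Rightarrow> complex \<Rightarrow> complex \<Rightarrow> complex \<Rightarrow> complex \<Rightarrow> complex" where
  "markoffK3_F a b c d e x r y s z t =
     of_int a * x^2 * y^2 * z^2
   + of_int b * (x^2 * y^2 * t^2 + x^2 * z^2 * s^2 + y^2 * z^2 * r^2)
   + of_int c * x * y * z * r * s * t
   + of_int d * (x^2 * s^2 * t^2 + y^2 * r^2 * t^2 + z^2 * r^2 * s^2)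
   + of_int e * r^2 * s^2 * t^2"

definition markoffK3_aff ::
  "int \<Rightarrow> int \<Rightarrow> int \<Rightarrow> int \<Rightarrow> int \<Rightarrow> 'a::comm_ring_1 \<Rightarrow> 'a \<Rightarrow> 'a \<Rightarrow> 'a" where
  "markoffK3_aff a b c d e x y z =
     of_int a * x^2 * y^2 * z^2 + of_int b * (x^2 * y^2 + x^2 * z^2 + y^2 * z^2)
   + of_int c * x * y * z + of_int d * (x^2 + y^2 + z^2) + of_int e"

definition markoffK3_singular_at ::
  "int \<Rightarrow> int \<Rightarrow> int \<Rightarrow> int \<Rightarrow> int \<Rightarrow>
   complex \<Rightarrow> complex \<Rightarrow> complex \<Rightarrow> complex \<Rightarrow> complex \<Rightarrow> complex \<Rightarrow> bool" where
  "markoffK3_singular_at a b c d e x r y s z t \<longleftrightarrow>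
     (x, r) \<noteq> (0, 0) \<and> (y, s) \<noteq> (0, 0) \<and> (z, t) \<noteq> (0, 0) \<and>
     markoffK3_F a b c d e x r y s z t = 0 \<and>
     deriv (\<lambda>u. markoffK3_F a b c d e u r y s z t) x = 0 \<and>
     deriv (\<lambda>u. markoffK3_F a b c d e x u y s z t) r = 0 \<and>
     deriv (\<lambda>u. markoffK3_F a b c d e x r u s z t) y = 0 \<and>
     deriv (\<lambda>u. markoffK3_F a b c d e x r y u z t) s = 0 \<and>
     deriv (\<lambda>u. markoffK3_F a b c d e x r y s u t) z = 0 \<and>
     deriv (\<lambda>u. markoffK3_F a b c d e x r y s z u) t = 0"

definition markoffK3_smooth :: "int \<Rightarrow> int \<Rightarrow> int \<Rightarrow> int \<Rightarrow> int \<Rightarrow> bool" where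
  "markoffK3_smooth a b c d e \<longleftrightarrow>
     (\<forall>x r y s z t. \<not> markoffK3_singular_at a b c d e x r y s z t)"

definition markoffK3_nondegenerate :: "int \<Rightarrow> int \<Rightarrow> int \<Rightarrow> int \<Rightarrow> int \<Rightarrow> bool" where
  "markoffK3_nondegenerate a b c d e \<longleftrightarrow> c \<noteq> 0 \<and> b * e \<noteq> d^2 \<and> a * d \<noteq> b^2"

definition poly3_eval :: "nat \<Rightarrow> (nat \<Rightarrow> nat \<Rightarrow> nat \<Rightarrow> rat) \<Rightarrow> 'a::field_char_0 \<Rightarrow> 'a \<Rightarrow> 'a \<Rightarrow> 'a" where
  "poly3_eval N G x y z =
     (\<Sum>i\<le>N. \<Sum>j\<le>N. \<Sum>k\<le>N. of_rat (G i j k) * x^i * y^j * z^k)"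

definition markoffK3_U_zariski_dense ::
  "int \<Rightarrow> int \<Rightarrow> int \<Rightarrow> int \<Rightarrow> int \<Rightarrow> (complex \<times> complex \<times> complex) set \<Rightarrow> bool" where
  "markoffK3_U_zariski_dense a b c d e S \<longleftrightarrow>
     (\<forall>N G. (\<forall>(x, y, z) \<in> S. poly3_eval N G x y z = 0) \<longrightarrow>
        (\<forall>x y z. markoffK3_aff a b c d e x y z = (0::complex) \<longrightarrow> poly3_eval N G x y z = 0))"

definition markoffK3_int_points :: "int \<Rightarrow> int \<Rightarrow> int \<Rightarrow> int \<Rightarrow> int \<Rightarrow> (complex \<times> complex \<times> complex) set" where
  "markoffK3_int_points a b c d e =
     {(of_int x, of_int y, of_int z) | x y z :: int. markoffK3_aff a b c d e x y z = 0}"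

end

(*
  Since a <> 0, the term a x^2 y^2 z^2 dominates the affine equation once all three
  coordinates are large, so every integral point has a coordinate of absolute value at
  most K = 3|b| + 2|c| + 3|d| + |e|. Hence the integral points lie on the union of the
  planes x = v, y = v, z = v with |v| <= K, i.e. on the zero set of P(x) P(y) P(z) with
  P(t) = prod (t - v). This polynomial does not vanish on U: solving the equation for z
  with x = y = 7/2 (possible as c <> 0) gives a point whose z-coordinate is not an
  integer, because -4 is not a square modulo 7.
*)
theory Submission
  imports Defs "HOL-Computational_Algebra.Fundamental_Theorem_Algebra"
begin

lemma abs_mult3_le_sum_squares:
  fixes x y z :: "'a::linordered_idom"
  shows "\<bar>x * y * z\<bar> \<le> x\<^sup>2 * y\<^sup>2 + z\<^sup>2"
proof -
  have "0 \<le> (\<bar>x * y\<bar> - \<bar>z\<bar>)\<^sup>2" by simp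
  then have "2 * (\<bar>x * y\<bar> * \<bar>z\<bar>) \<le> \<bar>x * y\<bar>\<^sup>2 + \<bar>z\<bar>\<^sup>2"
    by (simp add: power2_diff mult.assoc)
  moreover have "\<bar>x * y * z\<bar> \<le> 2 * (\<bar>x * y\<bar> * \<bar>z\<bar>)" by (simp add: abs_mult)
  moreover have "\<bar>x * y\<bar>\<^sup>2 + \<bar>z\<bar>\<^sup>2 = x\<^sup>2 * y\<^sup>2 + z\<^sup>2" by (simp add: power_mult_distrib)
  ultimately show ?thesis by linarith
qed

lemma cubic_term_dominates:
  fixes X Y Z L \<beta> \<gamma> \<delta> \<epsilon> :: "'a::linordered_idom"
  assumes L: "1 \<le> L" "L \<le> X" "L \<le> Y" "L \<le> Z"
    and coeffs: "0 \<le> \<beta>" "0 \<le> \<gamma>" "0 \<le> \<delta>" "0 \<le> \<epsilon>"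
  shows "L * (\<beta> * (X*Y + X*Z + Y*Z) + \<gamma> * (X*Y + Z) + \<delta> * (X + Y + Z) + \<epsilon>)
           \<le> (3*\<beta> + 2*\<gamma> + 3*\<delta> + \<epsilon>) * (X*Y*Z)"
proof -
  have ge1: "1 \<le> X" "1 \<le> Y" "1 \<le> Z" using L by auto
  then have pos: "0 \<le> X" "0 \<le> Y" "0 \<le> Z" "0 \<le> L" using L by auto
  have quad: "L * (X*Y) \<le> X*Y*Z" "L * (X*Z) \<le> X*Y*Z" "L * (Y*Z) \<le> X*Y*Z"
    using mult_right_mono[OF L(4), of "X*Y"] mult_right_mono[OF L(3), of "X*Z"]
      mult_right_mono[OF L(2), of "Y*Z"] pos
    by (simp_all add: ac_simps)
  have "L * X \<le> L * (X*Y)" "L * Y \<le> L * (Y*Z)" "L * Z \<le> L * (X*Z)"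
    using mult_left_mono[OF ge1(2), of "L*X"] mult_left_mono[OF ge1(3), of "L*Y"]
      mult_left_mono[OF ge1(1), of "L*Z"] pos
    by (simp_all add: ac_simps)
  with quad have lin: "L * X \<le> X*Y*Z" "L * Y \<le> X*Y*Z" "L * Z \<le> X*Y*Z"
    by (meson order_trans)+
  have "L \<le> L * X" using mult_left_mono[OF ge1(1) pos(4)] by simp
  then have const: "L \<le> X*Y*Z" using lin(1) by (rule order_trans)
  have "L * (\<beta> * (X*Y + X*Z + Y*Z) + \<gamma> * (X*Y + Z) + \<delta> * (X + Y + Z) + \<epsilon>)
      = \<beta> * (L*(X*Y) + L*(X*Z) + L*(Y*Z)) + \<gamma> * (L*(X*Y) + L*Z)
        + \<delta> * (L*X + L*Y + L*Z) + \<epsilon> * L"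
    by (simp add: algebra_simps)
  also have "\<dots> \<le> \<beta> * (3*(X*Y*Z)) + \<gamma> * (2*(X*Y*Z)) + \<delta> * (3*(X*Y*Z)) + \<epsilon> * (X*Y*Z)"
    using quad lin const coeffs by (intro add_mono mult_left_mono) auto
  also have "\<dots> = (3*\<beta> + 2*\<gamma> + 3*\<delta> + \<epsilon>) * (X*Y*Z)"
    by (simp add: algebra_simps)
  finally show ?thesis .
qed

definition markoffK3_coord_bound :: "int \<Rightarrow> int \<Rightarrow> int \<Rightarrow> int \<Rightarrow> int" where
  "markoffK3_coord_bound b c d e = 3 * \<bar>b\<bar> + 2 * \<bar>c\<bar> + 3 * \<bar>d\<bar> + \<bar>e\<bar>"

lemma markoffK3_int_solution_small_coordinate:
  fixes x y z :: int
  assumes a: "a \<noteq> 0" and eq: "markoffK3_aff a b c d e x y z = 0"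
  defines "K \<equiv> markoffK3_coord_bound b c d e"
  shows "\<bar>x\<bar> \<le> K \<or> \<bar>y\<bar> \<le> K \<or> \<bar>z\<bar> \<le> K"
proof (rule ccontr)
  define L where "L = K + 1"
  define X Y Z where "X = x\<^sup>2" and "Y = y\<^sup>2" and "Z = z\<^sup>2"
  assume "\<not> ?thesis"
  then have "L \<le> \<bar>x\<bar>" "L \<le> \<bar>y\<bar>" "L \<le> \<bar>z\<bar>" by (auto simp: L_def)
  moreover have L1: "1 \<le> L" by (simp add: L_def K_def markoffK3_coord_bound_def)
  moreover have "\<bar>u\<bar> \<le> u\<^sup>2" if "1 \<le> \<bar>u\<bar>" for u :: int
    using self_le_power[OF that, of 2] by simp
  ultimately have L: "L \<le> X" "L \<le> Y" "L \<le> Z"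
    unfolding X_def Y_def Z_def by (meson order_trans)+
  have nonneg: "0 \<le> X" "0 \<le> Y" "0 \<le> Z" by (simp_all add: X_def Y_def Z_def)
  have XYZ_pos: "0 < X*Y*Z" using L L1 by simp
  have eqn: "a * (X*Y*Z) = - (b * (X*Y + X*Z + Y*Z) + c * (x*y*z) + d * (X + Y + Z) + e)"
    using eq unfolding markoffK3_aff_def X_def Y_def Z_def by (simp add: algebra_simps)
  have "\<bar>a\<bar> * (X*Y*Z) = \<bar>a * (X*Y*Z)\<bar>" using nonneg by (simp add: abs_mult)
  also have "\<dots> \<le> \<bar>b * (X*Y + X*Z + Y*Z)\<bar> + \<bar>c * (x*y*z)\<bar> + \<bar>d * (X + Y + Z)\<bar> + \<bar>e\<bar>"
    unfolding eqn by linarith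
  also have "\<dots> \<le> \<bar>b\<bar> * (X*Y + X*Z + Y*Z) + \<bar>c\<bar> * (X*Y + Z) + \<bar>d\<bar> * (X + Y + Z) + \<bar>e\<bar>"
    using abs_mult3_le_sum_squares[of x y z] nonneg unfolding X_def Y_def Z_def
    by (simp add: abs_mult mult_left_mono)
  finally have "L * (\<bar>a\<bar> * (X*Y*Z))
      \<le> L * (\<bar>b\<bar> * (X*Y + X*Z + Y*Z) + \<bar>c\<bar> * (X*Y + Z) + \<bar>d\<bar> * (X + Y + Z) + \<bar>e\<bar>)"
    using L1 by (simp add: mult_left_mono)
  also have "\<dots> \<le> K * (X*Y*Z)"
    unfolding K_def markoffK3_coord_bound_def using L1 L by (intro cubic_term_dominates) auto
  finally have "L * (\<bar>a\<bar> * (X*Y*Z)) \<le> K * (X*Y*Z)" .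
  moreover have "X*Y*Z \<le> \<bar>a\<bar> * (X*Y*Z)"
    using mult_right_mono[of 1 "\<bar>a\<bar>" "X*Y*Z"] a XYZ_pos by simp
  then have "L * (X*Y*Z) \<le> L * (\<bar>a\<bar> * (X*Y*Z))"
    using L1 by (simp add: mult_left_mono)
  ultimately show False
    using XYZ_pos by (simp add: L_def algebra_simps)
qed

lemma map_poly_of_rat_mult:
  "map_poly (of_rat :: rat \<Rightarrow> 'a::field_char_0) (p * q) = map_poly of_rat p * map_poly of_rat q"
  by (intro poly_eqI) (simp add: coeff_map_poly coeff_mult of_rat_sum of_rat_mult)

lemma map_poly_of_rat_prod:
  fixes f :: "'b \<Rightarrow> rat poly"
  assumes "finite A"
  shows "map_poly (of_rat :: rat \<Rightarrow> 'a::field_char_0) (\<Prod>i\<in>A. f i) = (\<Prod>i\<in>A. map_poly of_rat (f i))"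
  using assms by induction (simp_all add: map_poly_of_rat_mult)

lemma poly3_eval_product:
  fixes p :: "rat poly" and x y z :: "'a::field_char_0"
  shows "poly3_eval (degree p) (\<lambda>i j k. coeff p i * coeff p j * coeff p k) x y z
           = poly (map_poly of_rat p) x * poly (map_poly of_rat p) y * poly (map_poly of_rat p) z"
proof -
  let ?c = "\<lambda>i. of_rat (coeff p i) :: 'a" and ?n = "degree p"
  have "poly3_eval ?n (\<lambda>i j k. coeff p i * coeff p j * coeff p k) x y z
      = (\<Sum>i\<le>?n. \<Sum>j\<le>?n. \<Sum>k\<le>?n. (?c i * x ^ i) * ((?c j * y ^ j) * (?c k * z ^ k)))"
    by (simp add: poly3_eval_def of_rat_mult mult_ac)
  also have "\<dots> = (\<Sum>i\<le>?n. ?c i * x ^ i) * ((\<Sum>j\<le>?n. ?c j * y ^ j) * (\<Sum>k\<le>?n. ?c k * z ^ k))"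
    by (simp only: sum_distrib_right) (simp only: sum_distrib_left)
  also have "\<dots> = poly (map_poly of_rat p) x * poly (map_poly of_rat p) y * poly (map_poly of_rat p) z"
    by (simp add: poly_altdef degree_map_poly coeff_map_poly mult.assoc)
  finally show ?thesis .
qed

definition int_window_poly :: "int \<Rightarrow> rat poly" where
  "int_window_poly K = (\<Prod>v\<in>{-K..K}. [:- of_int v, 1:])"

lemma poly_int_window_poly_eq_0_iff:
  "poly (map_poly of_rat (int_window_poly K)) (x :: 'a::field_char_0) = 0
     \<longleftrightarrow> (\<exists>v. \<bar>v\<bar> \<le> K \<and> x = of_int v)"
proof -
  have "map_poly of_rat (int_window_poly K) = (\<Prod>v\<in>{-K..K}. [:- of_int v, 1 :: 'a:])"
    by (simp add: int_window_poly_def map_poly_of_rat_prod map_poly_pCons of_rat_minus)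
  then show ?thesis
    by (auto simp: poly_prod abs_le_iff)
qed

lemma markoffK3_aff_solvable_in_z:
  fixes x y :: complex
  assumes "c \<noteq> 0" "x \<noteq> 0" "y \<noteq> 0"
  shows "\<exists>z. markoffK3_aff a b c d e x y z = 0"
proof -
  define p where "p = [: of_int b * x\<^sup>2 * y\<^sup>2 + of_int d * (x\<^sup>2 + y\<^sup>2) + of_int e,
                        of_int c * x * y,
                        of_int a * x\<^sup>2 * y\<^sup>2 + of_int b * (x\<^sup>2 + y\<^sup>2) + of_int d :]"
  have "markoffK3_aff a b c d e x y z = poly p z" for z
    by (simp add: p_def markoffK3_aff_def algebra_simps power2_eq_square)
  moreover have "\<exists>z. poly p z = 0"
    using assms by (intro fundamental_theorem_of_algebra_alt) (auto simp: p_def)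
  ultimately show ?thesis by simp
qed

lemma not_seven_dvd_square_plus_four: "\<not> (7::int) dvd v\<^sup>2 + 4"
proof
  assume "(7::int) dvd v\<^sup>2 + 4"
  then have "((v mod 7)\<^sup>2 + 4) mod 7 = 0"
    by (metis dvd_eq_mod_eq_0 mod_add_left_eq power_mod)
  moreover have "0 \<le> v mod 7" "v mod 7 < 7" by simp_all
  then have "v mod 7 \<in> {0, 1, 2, 3, 4, 5, 6}" by auto
  ultimately show False by auto
qed

lemma markoffK3_aff_seven_halves_int_ne_zero:
  fixes v :: int
  assumes "[d = 1] (mod 7)" "[e = 4] (mod 7)"
  shows "markoffK3_aff a b c d e (7/2) (7/2) (of_int v) \<noteq> (0 :: 'a::field_char_0)"
proof
  define E where
    "E = 7 * (343 * a * v\<^sup>2 + 343 * b + 56 * b * v\<^sup>2 + 28 * c * v + 56 * d) + 16 * (d * v\<^sup>2 + e)"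
  assume "markoffK3_aff a b c d e (7/2) (7/2) (of_int v) = (0 :: 'a)"
  \<comment> \<open>every term of E except the last is a multiple of 7\<close>
  moreover have "16 * markoffK3_aff a b c d e (7/2) (7/2) (of_int v) = (of_int E :: 'a)"
    by (simp add: markoffK3_aff_def E_def algebra_simps power2_eq_square power4_eq_xxxx)
  ultimately have "E = 0" by simp
  then have "16 * (d * v\<^sup>2 + e) = 7 * - (343 * a * v\<^sup>2 + 343 * b + 56 * b * v\<^sup>2 + 28 * c * v + 56 * d)"
    unfolding E_def by linarith
  then have "(7::int) dvd 16 * (d * v\<^sup>2 + e)" by (metis dvd_triv_left)
  moreover have "(7::int) dvd 16 * m \<Longrightarrow> 7 dvd m" for m by presburger
  ultimately have "(7::int) dvd d * v\<^sup>2 + e" by blast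
  moreover have "[d * v\<^sup>2 + e = 1 * v\<^sup>2 + 4] (mod 7)"
    using assms by (intro cong_add cong_mult cong_refl)
  ultimately have "(7::int) dvd v\<^sup>2 + 4" by (simp add: cong_dvd_iff)
  with not_seven_dvd_square_plus_four show False ..
qed

theorem proposition6p1:
  fixes a b c d e :: int
  assumes "a \<noteq> 0" "b \<noteq> 0" "c \<noteq> 0" "d \<noteq> 0" "e \<noteq> 0"
    and "[a = 0] (mod 7)" "[b = -1] (mod 7)" "[c = 1] (mod 7)" "[d = 1] (mod 7)" "[e = 4] (mod 7)"
    and "markoffK3_smooth a b c d e"
    and "markoffK3_nondegenerate a b c d e"
  shows "\<not> markoffK3_U_zariski_dense a b c d e (markoffK3_int_points a b c d e)"
proof -
  define p where "p = int_window_poly (markoffK3_coord_bound b c d e)"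
  define G where "G = (\<lambda>i j k. coeff p i * coeff p j * coeff p k)"
  let ?P = "poly (map_poly of_rat p) :: complex \<Rightarrow> complex"
  have P_eq_0_iff: "?P x = 0 \<longleftrightarrow> (\<exists>v. \<bar>v\<bar> \<le> markoffK3_coord_bound b c d e \<and> x = of_int v)" for x
    unfolding p_def by (rule poly_int_window_poly_eq_0_iff)
  have G_eval: "poly3_eval (degree p) G x y z = ?P x * ?P y * ?P z" for x y z :: complex
    unfolding G_def by (rule poly3_eval_product)
  have vanishes: "poly3_eval (degree p) G x y z = 0"
    if "(x, y, z) \<in> markoffK3_int_points a b c d e" for x y z
  proof -
    from that obtain x' y' z' :: int where "x = of_int x'" "y = of_int y'" "z = of_int z'"
      and "markoffK3_aff a b c d e x' y' z' = 0"
      unfolding markoffK3_int_points_def by blast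
    with markoffK3_int_solution_small_coordinate[OF \<open>a \<noteq> 0\<close>]
    have "?P x = 0 \<or> ?P y = 0 \<or> ?P z = 0" by (auto simp: P_eq_0_iff)
    then show ?thesis by (auto simp: G_eval)
  qed
  obtain z where on_U: "markoffK3_aff a b c d e (7/2) (7/2) z = (0::complex)"
    using markoffK3_aff_solvable_in_z[OF \<open>c \<noteq> 0\<close>] by fastforce
  have "?P (7/2) \<noteq> 0"
  proof
    assume "?P (7/2) = 0"
    then obtain v where "(7/2 :: complex) = of_int v" by (auto simp: P_eq_0_iff)
    then have "(of_int (2 * v) :: complex) = of_int 7" by (simp add: field_simps)
    then have "2 * v = 7" by (simp only: of_int_eq_iff)
    then show False by presburger
  qed
  moreover have "?P z \<noteq> 0"
  proof
    assume "?P z = 0"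
    then obtain v where "z = of_int v" by (auto simp: P_eq_0_iff)
    with on_U markoffK3_aff_seven_halves_int_ne_zero[OF \<open>[d = 1] (mod 7)\<close> \<open>[e = 4] (mod 7)\<close>]
    show False by blast
  qed
  ultimately have "poly3_eval (degree p) G (7/2) (7/2) z \<noteq> 0" by (simp add: G_eval)
  with vanishes on_U show ?thesis
    unfolding markoffK3_U_zariski_dense_def by blast
qed

end
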